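(* Let $K\in\{\mathbb R,\mathbb C,\mathbb H\}$ and let $(E,d)$ be a metric vector space over $K$ such that $d$ is $C_0$-translation invariant and $(C_1,C_2,C_3)$-lipschitz multiplicative. Let $d_0(x,y)=\int_{\mathbb U}d(ux,uy)\,d\mu(u)$, $\delta_0(x,y)=\lim_{n\to\infty}\frac1n d_0(nx,ny)$, let $E_0$ be the maximal linear subspace of $E$ on which $d$ is bounded, let $\|\bar x\|=\delta_0(x,0)$ for $\bar x=x+E_0\in E/E_0$, and let $D$, $D_0$ be the Hausdorff distances for $d$, $d_0$ between classes modulo $E_0$. Then the norm $\|\cdot\|$ is $(C_1,C_2+C_3)$-lipschitz equivalent to $D_0$ and $(C_1^2,C_2')$-lipschitz equivalent to $D$, where $C_2'=C_1C_2+C_1C_3+C_2$.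
   Context: A metric vector space is a topological vector space over $K$ whose topology is generated by the metric $d$. $\mathbb U=\{u\in K:|u|=1\}$, $\mu$ the right-invariant Haar probability measure on $\mathbb U$. $d$ is $C_0$-translation invariant if $d(x+z,y+z)\le d(x,y)+C_0$ for all $x,y,z$. $(C_1,C_2,C_3)$-lipschitz multiplicative ($C_1\ge1$, $C_2,C_3\ge0$) means $C_1^{-1}|\lambda|d(x,y)-C_2|\lambda|-C_3\le d(\lambda x,\lambda y)\le C_1|\lambda|d(x,y)+C_2|\lambda|+C_3$ for all $\lambda\in K$, $x,y\in E$. Hausdorff distance between classes for a distance $\rho$: $\max\big(\inf_{x\in x_0+E_0}\sup_{y\in y_0+E_0}\rho(x,y),\ \inf_{y\in y_0+E_0}\sup_{x\in x_0+E_0}\rho(x,y)\big)$. A distance $\rho$ is $(A,B)$-lipschitz equivalent to $\sigma$ if $A^{-1}\sigma-B\le\rho\le A\sigma+B$ pointwise; here the norm is viewed as the distance $(\bar x,\bar y)\mapsto\|\bar x-\bar y\|$. (Under these hypotheses $\delta_0$ exists and $\|\cdot\|$ is a well-defined norm.) *)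

theory Defs
  imports "HOL-Probability.Probability"
begin

text \<open>The scalar field K is modelled as a type 'k of class
  real_normed_div_algebra and euclidean_space: by Frobenius' theorem these are
  exactly R, C, H (up to isomorphism).\<close>

definition metric_vector_space :: "('k::real_normed_div_algebra \<Rightarrow> 'e::{metric_space,ab_group_add} \<Rightarrow> 'e) \<Rightarrow> bool" where
  "metric_vector_space sm \<longleftrightarrow>
     (\<forall>x. sm 1 x = x) \<and>
     (\<forall>a b x. sm (a * b) x = sm a (sm b x)) \<and>
     (\<forall>a b x. sm (a + b) x = sm a x + sm b x) \<and>
     (\<forall>a x y. sm a (x + y) = sm a x + sm a y) \<and>
     continuous_on UNIV (\<lambda>p::'e \<times> 'e. fst p + snd p) \<and>
     continuous_on UNIV (\<lambda>p::'k \<times> 'e. sm (fst p) (snd p))"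

definition translation_invariant :: "real \<Rightarrow> ('e::{metric_space,ab_group_add}) itself \<Rightarrow> bool" where
  "translation_invariant C0 _ \<longleftrightarrow>
     (\<forall>x y z::'e. dist (x + z) (y + z) \<le> dist x y + C0)"

definition lipschitz_multiplicative ::
  "real \<Rightarrow> real \<Rightarrow> real \<Rightarrow> ('k::real_normed_div_algebra \<Rightarrow> 'e::metric_space \<Rightarrow> 'e) \<Rightarrow> bool" where
  "lipschitz_multiplicative C1 C2 C3 sm \<longleftrightarrow> C1 \<ge> 1 \<and> C2 \<ge> 0 \<and> C3 \<ge> 0 \<and>
     (\<forall>c x y. norm c * dist x y / C1 - C2 * norm c - C3 \<le> dist (sm c x) (sm c y) \<and>
              dist (sm c x) (sm c y) \<le> C1 * norm c * dist x y + C2 * norm c + C3)"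

text \<open>mu is the right-invariant Haar probability measure on the unit sphere U of K
  (characterised by being a right-invariant Borel probability measure on U,
  which determines it uniquely).\<close>
definition haar_unit_sphere :: "'k::real_normed_div_algebra measure \<Rightarrow> bool" where
  "haar_unit_sphere \<mu> \<longleftrightarrow> prob_space \<mu> \<and>
     sets \<mu> = sets (restrict_space borel (sphere (0::'k) 1)) \<and>
     space \<mu> = sphere 0 1 \<and>
     (\<forall>v \<in> sphere 0 1. distr \<mu> \<mu> (\<lambda>u. u * v) = \<mu>)"

definition d0 :: "('k::real_normed_div_algebra \<Rightarrow> 'e::metric_space \<Rightarrow> 'e) \<Rightarrow> 'k measure \<Rightarrow> 'e \<Rightarrow> 'e \<Rightarrow> real" where
  "d0 sm \<mu> x y = (\<integral>u. dist (sm u x) (sm u y) \<partial>\<mu>)"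

definition delta0 :: "('k::real_normed_div_algebra \<Rightarrow> 'e::metric_space \<Rightarrow> 'e) \<Rightarrow> 'k measure \<Rightarrow> 'e \<Rightarrow> 'e \<Rightarrow> real" where
  "delta0 sm \<mu> x y = lim (\<lambda>n. d0 sm \<mu> (sm (of_nat n) x) (sm (of_nat n) y) / real n)"

definition ksubspace :: "('k::real_normed_div_algebra \<Rightarrow> 'e::ab_group_add \<Rightarrow> 'e) \<Rightarrow> 'e set \<Rightarrow> bool" where
  "ksubspace sm F \<longleftrightarrow> 0 \<in> F \<and> (\<forall>x\<in>F. \<forall>y\<in>F. x + y \<in> F) \<and> (\<forall>c. \<forall>x\<in>F. sm c x \<in> F)"

definition dist_bounded_on :: "'e::metric_space set \<Rightarrow> bool" where
  "dist_bounded_on F \<longleftrightarrow> (\<exists>B. \<forall>x\<in>F. \<forall>y\<in>F. dist x y \<le> B)"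

definition E0 :: "('k::real_normed_div_algebra \<Rightarrow> 'e::{metric_space,ab_group_add} \<Rightarrow> 'e) \<Rightarrow> 'e set" where
  "E0 sm = (THE F. ksubspace sm F \<and> dist_bounded_on F \<and>
      (\<forall>G. ksubspace sm G \<and> dist_bounded_on G \<longrightarrow> G \<subseteq> F))"

definition hausdorff_cls :: "('e \<Rightarrow> 'e \<Rightarrow> real) \<Rightarrow> 'e::ab_group_add set \<Rightarrow> 'e \<Rightarrow> 'e \<Rightarrow> real" where
  "hausdorff_cls \<rho> F x y = max
     (INF a \<in> (\<lambda>e. x + e) ` F. SUP b \<in> (\<lambda>e. y + e) ` F. \<rho> a b)
     (INF b \<in> (\<lambda>e. y + e) ` F. SUP a \<in> (\<lambda>e. x + e) ` F. \<rho> a b)"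

definition qnorm :: "('k::real_normed_div_algebra \<Rightarrow> 'e::{metric_space,ab_group_add} \<Rightarrow> 'e) \<Rightarrow> 'k measure \<Rightarrow> 'e \<Rightarrow> real" where
  "qnorm sm \<mu> x = delta0 sm \<mu> x 0"

definition lipschitz_equiv :: "real \<Rightarrow> real \<Rightarrow> ('e \<Rightarrow> 'e \<Rightarrow> real) \<Rightarrow> ('e \<Rightarrow> 'e \<Rightarrow> real) \<Rightarrow> bool" where
  "lipschitz_equiv A B \<rho> \<sigma> \<longleftrightarrow> (\<forall>x y. \<sigma> x y / A - B \<le> \<rho> x y \<and> \<rho> x y \<le> A * \<sigma> x y + B)"

end

theory Submission
  imports Defs
begin

text \<open>A vector whose integer multiples stay bounded lies within \<open>C\<^sub>3\<close> of \<open>0\<close> (scale \<open>nx\<close>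
  back down by \<open>1/n\<close>), so \<open>E\<^sub>0\<close> is the set of \<open>x\<close> with \<open>d(\<lambda>x, 0) \<le> C\<^sub>3\<close> for all \<open>\<lambda>\<close>.
  Up to the additive constant \<open>C\<^sub>0\<close>, \<open>n \<mapsto> d\<^sub>0(nx, 0)\<close> is subadditive, so by Fekete's lemma
  \<open>\<delta>\<^sub>0(x, 0)\<close> exists; translation invariance up to \<open>C\<^sub>0\<close> gives \<open>\<delta>\<^sub>0(x, y) = \<delta>\<^sub>0(x - y, 0)\<close>,
  and moving \<open>x\<close> within its class changes \<open>d\<^sub>0(nx, 0)\<close> by at most \<open>C\<^sub>3\<close>, so \<open>\<delta>\<^sub>0\<close> is
  constant on pairs of classes. Applying the lipschitz bounds once (for \<open>d\<^sub>0\<close>) or twice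
  (for \<open>d\<close>) to \<open>d(u(nx), u(ny))\<close>, integrating over \<open>u\<close> and dividing by \<open>n\<close> compares
  \<open>\<delta>\<^sub>0(a, b)\<close> with \<open>d\<^sub>0(a, b)\<close> and \<open>d(a, b)\<close> for all representatives \<open>a, b\<close>, and such
  pairwise bounds pass to the Hausdorff distances.\<close>

lemma subadditive_iterate:
  fixes b :: "nat \<Rightarrow> real"
  assumes sub: "\<And>m n. 0 < m \<Longrightarrow> 0 < n \<Longrightarrow> b (m + n) \<le> b m + b n"
    and "0 < m" "0 < r"
  shows "b (q * m + r) \<le> real q * b m + b r"
proof (induction q)
  case (Suc q)
  have "b (Suc q * m + r) = b (m + (q * m + r))" by (simp add: algebra_simps)
  also have "\<dots> \<le> b m + b (q * m + r)" using sub assms(2,3) by simp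
  also have "\<dots> \<le> b m + (real q * b m + b r)" using Suc by simp
  finally show ?case by (simp add: algebra_simps)
qed simp

lemma subadditive_quotient_le:
  fixes b :: "nat \<Rightarrow> real"
  assumes sub: "\<And>m n. 0 < m \<Longrightarrow> 0 < n \<Longrightarrow> b (m + n) \<le> b m + b n"
    and nonneg: "\<And>n. 0 < n \<Longrightarrow> 0 \<le> b n"
    and m: "0 < m" and n: "0 < n"
  shows "b n / real n \<le> b m / real m + (\<Sum>k = 1..m. b k) / real n"
proof -
  define q where "q = (n - 1) div m"
  define r where "r = (n - 1) mod m + 1"
  have n_eq: "n = q * m + r"
    using div_mult_mod_eq[of "n - 1" m] n unfolding q_def r_def by simp
  have r: "1 \<le> r" "r \<le> m" unfolding r_def using m by (auto simp: Suc_le_eq)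
  have "b n \<le> real q * b m + b r"
    using subadditive_iterate[OF sub m, of r q] r n_eq by simp
  also have "real q * b m \<le> real n / real m * b m"
  proof (rule mult_right_mono)
    have "real q * real m \<le> real n" using n_eq by (metis le_add1 of_nat_le_iff of_nat_mult)
    then show "real q \<le> real n / real m" using m by (simp add: field_simps)
  qed (use nonneg m in auto)
  also have "b r \<le> (\<Sum>k = 1..m. b k)"
    using r nonneg by (intro member_le_sum) auto
  finally show ?thesis using n by (simp add: field_simps)
qed

lemma fekete_convergent:
  fixes b :: "nat \<Rightarrow> real"
  assumes sub: "\<And>m n. 0 < m \<Longrightarrow> 0 < n \<Longrightarrow> b (m + n) \<le> b m + b n"
    and nonneg: "\<And>n. 0 < n \<Longrightarrow> 0 \<le> b n"
  shows "convergent (\<lambda>n. b n / real n)"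
proof -
  define s where "s = Inf ((\<lambda>n. b n / real n) ` {0<..})"
  have bdd: "bdd_below ((\<lambda>n. b n / real n) ` {0<..})"
    using nonneg by (intro bdd_belowI[of _ 0]) auto
  have s_le: "s \<le> b n / real n" if "0 < n" for n
    unfolding s_def using bdd that by (intro cInf_lower) auto
  have "(\<lambda>n. b n / real n) \<longlonglongrightarrow> s"
  proof (rule LIMSEQ_I)
    fix \<epsilon> :: real assume \<epsilon>: "0 < \<epsilon>"
    obtain m where m: "0 < m" "b m / real m < s + \<epsilon> / 2"
      using cInf_lessD[of "(\<lambda>n. b n / real n) ` {0<..}" "s + \<epsilon> / 2"] \<epsilon> unfolding s_def by auto
    define M where "M = (\<Sum>k = 1..m. b k)"
    obtain n0 :: nat where n0: "2 * M / \<epsilon> < real n0" using reals_Archimedean2 by blast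
    have "norm (b n / real n - s) < \<epsilon>" if n: "Suc n0 \<le> n" for n
    proof -
      have "M / real n < \<epsilon> / 2"
      proof -
        have "2 * M < \<epsilon> * real n0" using n0 \<epsilon> by (simp add: field_simps)
        also have "\<dots> \<le> \<epsilon> * real n" using n \<epsilon> by simp
        finally show ?thesis using n by (simp add: field_simps)
      qed
      moreover have "b n / real n \<le> b m / real m + M / real n"
        unfolding M_def using subadditive_quotient_le[OF sub nonneg m(1), of n] n by simp
      ultimately have "b n / real n < s + \<epsilon>" using m(2) by linarith
      then show ?thesis using s_le[of n] n by simp
    qed
    then show "\<exists>no. \<forall>n\<ge>no. norm (b n / real n - s) < \<epsilon>" by blast
  qed
  then show ?thesis by (auto simp: convergent_def)
qed

lemma LIMSEQ_divide_n_bounded_diff: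
  fixes f g :: "nat \<Rightarrow> real"
  assumes "\<And>n. \<bar>f n - g n\<bar> \<le> K" and "(\<lambda>n. g n / real n) \<longlonglongrightarrow> L"
  shows "(\<lambda>n. f n / real n) \<longlonglongrightarrow> L"
proof (rule real_tendsto_sandwich)
  have "g n - K \<le> f n" "f n \<le> g n + K" for n
    using assms(1)[of n] by (simp_all add: abs_le_iff)
  then show "\<forall>\<^sub>F n in sequentially. g n / real n - K / real n \<le> f n / real n"
    and "\<forall>\<^sub>F n in sequentially. f n / real n \<le> g n / real n + K / real n"
    by (auto intro!: always_eventually divide_right_mono
        simp: diff_divide_distrib[symmetric] add_divide_distrib[symmetric])
  show "(\<lambda>n. g n / real n - K / real n) \<longlonglongrightarrow> L"
    using tendsto_diff[OF assms(2) lim_const_over_n[of K]] by simp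
  show "(\<lambda>n. g n / real n + K / real n) \<longlonglongrightarrow> L"
    using tendsto_add[OF assms(2) lim_const_over_n[of K]] by simp
qed

lemma LIMSEQ_divide_n_le:
  fixes f :: "nat \<Rightarrow> real"
  assumes "\<And>n. 0 < n \<Longrightarrow> f n \<le> A * real n + K" and "(\<lambda>n. f n / real n) \<longlonglongrightarrow> L"
  shows "L \<le> A"
proof (rule LIMSEQ_le[OF assms(2)])
  show "(\<lambda>n. A + K / real n) \<longlonglongrightarrow> A"
    using tendsto_add[OF tendsto_const lim_const_over_n[of K]] by simp
  have "f n / real n \<le> A + K / real n" if "1 \<le> n" for n
    using divide_right_mono[OF assms(1)[of n], of "real n"] that by (simp add: add_divide_distrib)
  then show "\<exists>N. \<forall>n\<ge>N. f n / real n \<le> A + K / real n" by blast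
qed

lemma LIMSEQ_divide_n_ge:
  fixes f :: "nat \<Rightarrow> real"
  assumes "\<And>n. 0 < n \<Longrightarrow> A * real n + K \<le> f n" and "(\<lambda>n. f n / real n) \<longlonglongrightarrow> L"
  shows "A \<le> L"
proof (rule LIMSEQ_le[OF _ assms(2)])
  show "(\<lambda>n. A + K / real n) \<longlonglongrightarrow> A"
    using tendsto_add[OF tendsto_const lim_const_over_n[of K]] by simp
  have "A + K / real n \<le> f n / real n" if "1 \<le> n" for n
    using divide_right_mono[OF assms(1)[of n], of "real n"] that by (simp add: add_divide_distrib)
  then show "\<exists>N. \<forall>n\<ge>N. A + K / real n \<le> f n / real n" by blast
qed

lemma cSUP_between:
  fixes f :: "'a \<Rightarrow> real"
  assumes "Y \<noteq> {}" and "\<And>b. b \<in> Y \<Longrightarrow> L \<le> f b \<and> f b \<le> U"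
  shows "L \<le> (SUP b\<in>Y. f b) \<and> (SUP b\<in>Y. f b) \<le> U"
proof
  obtain b0 where b0: "b0 \<in> Y" using assms(1) by blast
  have "bdd_above (f ` Y)" using assms(2) by (auto intro!: bdd_aboveI[of _ U])
  then show "L \<le> (SUP b\<in>Y. f b)" using assms(2)[OF b0] cSUP_upper[OF b0] by force
  show "(SUP b\<in>Y. f b) \<le> U" using assms by (intro cSUP_least) auto
qed

lemma cINF_between:
  fixes f :: "'a \<Rightarrow> real"
  assumes "Y \<noteq> {}" and "\<And>b. b \<in> Y \<Longrightarrow> L \<le> f b \<and> f b \<le> U"
  shows "L \<le> (INF b\<in>Y. f b) \<and> (INF b\<in>Y. f b) \<le> U"
proof
  obtain b0 where b0: "b0 \<in> Y" using assms(1) by blast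
  have "bdd_below (f ` Y)" using assms(2) by (auto intro!: bdd_belowI[of _ L])
  then show "(INF b\<in>Y. f b) \<le> U" using assms(2)[OF b0] cINF_lower[OF _ b0] by force
  show "L \<le> (INF b\<in>Y. f b)" using assms by (intro cINF_greatest) auto
qed

lemma hausdorff_cls_between:
  fixes \<rho> :: "'e::ab_group_add \<Rightarrow> 'e \<Rightarrow> real"
  assumes "0 \<in> F"
    and "\<And>a b. a \<in> (\<lambda>e. x + e) ` F \<Longrightarrow> b \<in> (\<lambda>e. y + e) ` F \<Longrightarrow> L \<le> \<rho> a b \<and> \<rho> a b \<le> U"
  shows "L \<le> hausdorff_cls \<rho> F x y \<and> hausdorff_cls \<rho> F x y \<le> U"
proof -
  have ne: "(\<lambda>e. x + e) ` F \<noteq> {}" "(\<lambda>e. y + e) ` F \<noteq> {}" using assms(1) by auto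
  have "L \<le> (INF a \<in> (\<lambda>e. x + e) ` F. SUP b \<in> (\<lambda>e. y + e) ` F. \<rho> a b) \<and>
      (INF a \<in> (\<lambda>e. x + e) ` F. SUP b \<in> (\<lambda>e. y + e) ` F. \<rho> a b) \<le> U"
    "L \<le> (INF b \<in> (\<lambda>e. y + e) ` F. SUP a \<in> (\<lambda>e. x + e) ` F. \<rho> a b) \<and>
      (INF b \<in> (\<lambda>e. y + e) ` F. SUP a \<in> (\<lambda>e. x + e) ` F. \<rho> a b) \<le> U"
    by (intro cINF_between ne cSUP_between assms(2); assumption)+
  then show ?thesis unfolding hausdorff_cls_def by auto
qed

lemma lipschitz_equiv_hausdorff_cls:
  fixes \<sigma> :: "'e::ab_group_add \<Rightarrow> 'e \<Rightarrow> real"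
  assumes "0 \<in> F" and A: "0 < A"
    and pairs: "\<And>x y a b. a \<in> (\<lambda>e. x + e) ` F \<Longrightarrow> b \<in> (\<lambda>e. y + e) ` F \<Longrightarrow>
        \<sigma> a b / A - B \<le> \<rho> x y \<and> \<rho> x y \<le> A * \<sigma> a b + B"
  shows "lipschitz_equiv A B \<rho> (hausdorff_cls \<sigma> F)"
  unfolding lipschitz_equiv_def
proof (intro allI)
  fix x y
  have "(\<rho> x y - B) / A \<le> hausdorff_cls \<sigma> F x y \<and> hausdorff_cls \<sigma> F x y \<le> A * (\<rho> x y + B)"
  proof (rule hausdorff_cls_between[OF assms(1)])
    fix a b assume "a \<in> (\<lambda>e. x + e) ` F" "b \<in> (\<lambda>e. y + e) ` F"
    then show "(\<rho> x y - B) / A \<le> \<sigma> a b \<and> \<sigma> a b \<le> A * (\<rho> x y + B)"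
      using pairs A by (fastforce simp: field_simps)
  qed
  then show "hausdorff_cls \<sigma> F x y / A - B \<le> \<rho> x y \<and> \<rho> x y \<le> A * hausdorff_cls \<sigma> F x y + B"
    using A by (simp add: field_simps)
qed

locale lipschitz_metric_vector_space =
  fixes sm :: "'k::real_normed_div_algebra \<Rightarrow> 'e::{metric_space,ab_group_add} \<Rightarrow> 'e"
    and C0 C1 C2 C3 :: real
  assumes metric_vector_space: "metric_vector_space sm"
    and translation_invariant: "translation_invariant C0 TYPE('e)"
    and lipschitz_multiplicative: "lipschitz_multiplicative C1 C2 C3 sm"
begin

lemma scale_one [simp]: "sm 1 x = x"
  and scale_mult: "sm (a * b) x = sm a (sm b x)"
  and scale_add_left: "sm (a + b) x = sm a x + sm b x"
  and scale_add_right: "sm a (x + y) = sm a x + sm a y"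
  using metric_vector_space unfolding metric_vector_space_def by blast+

lemma scale_zero_right [simp]: "sm a 0 = 0"
  using scale_add_right[of a 0 0] by simp

lemma scale_zero_left [simp]: "sm 0 x = 0"
  using scale_add_left[of 0 0 x] by simp

lemma scale_minus_one: "sm (-1) x = - x"
  using scale_add_left[of "-1" 1 x] by (simp add: eq_neg_iff_add_eq_0)

lemma scale_of_nat_commute: "sm u (sm (of_nat n) x) = sm (of_nat n) (sm u x)"
  by (simp add: scale_mult[symmetric] mult_of_nat_commute)

lemma dist_add_right_le: "dist (x + z) (y + z) \<le> dist x y + C0" for x y z :: 'e
  using translation_invariant unfolding translation_invariant_def by blast

lemma C0_nonneg: "0 \<le> C0"
  using dist_add_right_le[of 0 0 0] by simp

lemma C1_ge_1: "1 \<le> C1" and C2_nonneg: "0 \<le> C2" and C3_nonneg: "0 \<le> C3"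
  using lipschitz_multiplicative unfolding lipschitz_multiplicative_def by auto

lemma dist_scale_le: "dist (sm c x) (sm c y) \<le> C1 * norm c * dist x y + C2 * norm c + C3"
  and dist_scale_ge: "norm c * dist x y / C1 - C2 * norm c - C3 \<le> dist (sm c x) (sm c y)"
  using lipschitz_multiplicative unfolding lipschitz_multiplicative_def by blast+

lemma dist_add_zero_le: "dist (x + y) 0 \<le> dist x 0 + C0 + dist y 0" for x y :: 'e
proof -
  have "dist (x + y) 0 \<le> dist (x + y) (0 + y) + dist y 0" using dist_triangle by simp
  also have "dist (x + y) (0 + y) \<le> dist x 0 + C0" by (rule dist_add_right_le)
  finally show ?thesis by simp
qed

lemma dist_le_C3_if_multiples_bounded:
  assumes B: "\<And>n::nat. dist (sm (of_nat n) y) 0 \<le> B"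
  shows "dist y 0 \<le> C3"
proof (rule LIMSEQ_le_const)
  show "(\<lambda>n. (C1 * B + C2) / real n + C3) \<longlonglongrightarrow> C3"
    using tendsto_add[OF lim_const_over_n tendsto_const] by simp
  have "dist y 0 \<le> (C1 * B + C2) / real n + C3" if "0 < n" for n
  proof -
    define c where "c = inverse (of_nat n :: 'k)"
    have norm_c: "norm c = 1 / real n" unfolding c_def by (simp add: norm_inverse divide_inverse)
    have "sm c (sm (of_nat n) y) = y"
      unfolding c_def scale_mult[symmetric] using \<open>0 < n\<close> by simp
    then have "dist y 0 = dist (sm c (sm (of_nat n) y)) (sm c 0)" by simp
    also have "\<dots> \<le> C1 * norm c * dist (sm (of_nat n) y) 0 + C2 * norm c + C3" by (rule dist_scale_le)
    also have "\<dots> \<le> C1 * norm c * B + C2 * norm c + C3"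
      using B[of n] C1_ge_1 C2_nonneg by (intro add_mono mult_left_mono) (auto simp: norm_c)
    also have "\<dots> = (C1 * B + C2) / real n + C3" unfolding norm_c by (simp add: field_simps add_divide_distrib)
    finally show ?thesis .
  qed
  then show "\<exists>N. \<forall>n\<ge>N. dist y 0 \<le> (C1 * B + C2) / real n + C3"
    by (intro exI[of _ 1]) auto
qed

definition bounded_part :: "'e set" where
  "bounded_part = {x. \<forall>c. dist (sm c x) 0 \<le> C3}"

lemma bounded_part_scale: "x \<in> bounded_part \<Longrightarrow> sm c x \<in> bounded_part"
  unfolding bounded_part_def by (simp add: scale_mult[symmetric])

lemma bounded_part_add:
  assumes "x \<in> bounded_part" "y \<in> bounded_part"
  shows "x + y \<in> bounded_part"
  unfolding bounded_part_def
proof (intro CollectI allI)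
  fix c
  show "dist (sm c (x + y)) 0 \<le> C3"
  proof (rule dist_le_C3_if_multiples_bounded)
    fix n :: nat
    have "sm (of_nat n) (sm c (x + y)) = sm (of_nat n * c) x + sm (of_nat n * c) y"
      by (simp add: scale_mult scale_add_right)
    then have "dist (sm (of_nat n) (sm c (x + y))) 0
        \<le> dist (sm (of_nat n * c) x) 0 + C0 + dist (sm (of_nat n * c) y) 0"
      using dist_add_zero_le by simp
    also have "\<dots> \<le> C3 + C0 + C3" using assms unfolding bounded_part_def by (intro add_mono) auto
    finally show "dist (sm (of_nat n) (sm c (x + y))) 0 \<le> C3 + C0 + C3" .
  qed
qed

lemma bounded_part_diff: "x \<in> bounded_part \<Longrightarrow> y \<in> bounded_part \<Longrightarrow> x - y \<in> bounded_part"
  using bounded_part_add[of x "sm (-1) y"] bounded_part_scale[of y "-1"] by (simp add: scale_minus_one)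

lemma ksubspace_bounded_part: "ksubspace sm bounded_part"
  unfolding ksubspace_def using bounded_part_add bounded_part_scale C3_nonneg
  by (auto simp: bounded_part_def)

lemma dist_bounded_on_bounded_part: "dist_bounded_on bounded_part"
  unfolding dist_bounded_on_def
proof (intro exI ballI)
  fix a b assume "a \<in> bounded_part" "b \<in> bounded_part"
  then have "dist (sm 1 (a - b)) 0 \<le> C3"
    using bounded_part_diff unfolding bounded_part_def by blast
  moreover have "dist ((a - b) + b) (0 + b) \<le> dist (a - b) 0 + C0" by (rule dist_add_right_le)
  ultimately show "dist a b \<le> C3 + C0" by simp
qed

lemma bounded_subspace_subset_bounded_part:
  assumes "ksubspace sm G" "dist_bounded_on G"
  shows "G \<subseteq> bounded_part"
proof
  fix x assume x: "x \<in> G"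
  obtain B where B: "\<forall>a\<in>G. \<forall>b\<in>G. dist a b \<le> B"
    using assms(2) unfolding dist_bounded_on_def by blast
  have G: "0 \<in> G" "\<And>c y. y \<in> G \<Longrightarrow> sm c y \<in> G"
    using assms(1) unfolding ksubspace_def by auto
  have "dist (sm c x) 0 \<le> C3" for c
    by (rule dist_le_C3_if_multiples_bounded[where B = B]) (use B G x in blast)
  then show "x \<in> bounded_part" unfolding bounded_part_def by blast
qed

lemma E0_eq_bounded_part: "E0 sm = bounded_part"
  unfolding E0_def
  by (rule the_equality)
    (use ksubspace_bounded_part dist_bounded_on_bounded_part bounded_subspace_subset_bounded_part
      in blast)+

lemma zero_in_E0: "0 \<in> E0 sm"
  using ksubspace_bounded_part unfolding E0_eq_bounded_part ksubspace_def by blast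

end

locale averaged_lipschitz_metric_vector_space = lipschitz_metric_vector_space sm C0 C1 C2 C3
  for sm :: "'k::real_normed_div_algebra \<Rightarrow> 'e::{metric_space,ab_group_add} \<Rightarrow> 'e"
    and C0 C1 C2 C3 +
  fixes \<mu> :: "'k measure"
  assumes haar: "haar_unit_sphere \<mu>"
begin

lemma prob_space_\<mu>: "prob_space \<mu>"
  and space_\<mu>: "space \<mu> = sphere 0 1"
  and sets_\<mu>: "sets \<mu> = sets (restrict_space borel (sphere (0::'k) 1))"
  using haar unfolding haar_unit_sphere_def by auto

lemma integrable_dist_scale: "integrable \<mu> (\<lambda>u. dist (sm u a) (sm u b))"
proof -
  interpret prob_space \<mu> by (rule prob_space_\<mu>)
  have scale_cont: "continuous_on UNIV (\<lambda>p::'k \<times> 'e. sm (fst p) (snd p))"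
    using metric_vector_space unfolding metric_vector_space_def by blast
  have "continuous_on A (\<lambda>u. sm u x)" for A x
  proof -
    have "continuous_on A (\<lambda>u. (u, x))" by (intro continuous_intros)
    from continuous_on_compose2[OF scale_cont this subset_UNIV] show ?thesis by simp
  qed
  then have "(\<lambda>u. dist (sm u a) (sm u b)) \<in> borel_measurable (restrict_space borel (sphere (0::'k) 1))"
    by (intro borel_measurable_continuous_on_restrict continuous_intros)
  then have measurable: "(\<lambda>u. dist (sm u a) (sm u b)) \<in> borel_measurable \<mu>"
    unfolding measurable_cong_sets[OF sets_\<mu> refl] .
  have "AE u in \<mu>. norm (dist (sm u a) (sm u b)) \<le> C1 * dist a b + C2 + C3"
  proof (rule AE_I2)
    fix u assume "u \<in> space \<mu>"
    then show "norm (dist (sm u a) (sm u b)) \<le> C1 * dist a b + C2 + C3"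
      using dist_scale_le[of u a b] by (simp add: space_\<mu>)
  qed
  then show ?thesis by (rule integrable_const_bound[OF _ measurable])
qed

lemma integral_affine_dist_scale:
  "(\<integral>u. c * dist (sm u a) (sm u b) + k \<partial>\<mu>) = c * d0 sm \<mu> a b + k"
proof -
  interpret prob_space \<mu> by (rule prob_space_\<mu>)
  show ?thesis unfolding d0_def
    using integrable_dist_scale by (subst Bochner_Integration.integral_add) (auto simp: prob_space)
qed

lemma d0_le_affine:
  assumes "\<And>u. norm u = 1 \<Longrightarrow> dist (sm u p) (sm u q) \<le> c * dist (sm u a) (sm u b) + k"
  shows "d0 sm \<mu> p q \<le> c * d0 sm \<mu> a b + k"
proof -
  interpret prob_space \<mu> by (rule prob_space_\<mu>)
  have "d0 sm \<mu> p q \<le> (\<integral>u. c * dist (sm u a) (sm u b) + k \<partial>\<mu>)"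
    unfolding d0_def using assms integrable_dist_scale
    by (intro integral_mono) (auto simp: space_\<mu>)
  then show ?thesis by (simp only: integral_affine_dist_scale)
qed

lemma d0_ge_affine:
  assumes "\<And>u. norm u = 1 \<Longrightarrow> c * dist (sm u a) (sm u b) + k \<le> dist (sm u p) (sm u q)"
  shows "c * d0 sm \<mu> a b + k \<le> d0 sm \<mu> p q"
proof -
  interpret prob_space \<mu> by (rule prob_space_\<mu>)
  have "(\<integral>u. c * dist (sm u a) (sm u b) + k \<partial>\<mu>) \<le> d0 sm \<mu> p q"
    unfolding d0_def using assms integrable_dist_scale
    by (intro integral_mono) (auto simp: space_\<mu>)
  then show ?thesis by (simp only: integral_affine_dist_scale)
qed

lemma d0_le_const:
  "(\<And>u. norm u = 1 \<Longrightarrow> dist (sm u p) (sm u q) \<le> k) \<Longrightarrow> d0 sm \<mu> p q \<le> k"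
  using d0_le_affine[of p q 0 0 0 k] by simp

lemma d0_ge_const:
  "(\<And>u. norm u = 1 \<Longrightarrow> k \<le> dist (sm u p) (sm u q)) \<Longrightarrow> k \<le> d0 sm \<mu> p q"
  using d0_ge_affine[of 0 0 0 k p q] by simp

lemma d0_nonneg: "0 \<le> d0 sm \<mu> p q"
  by (rule d0_ge_const) simp

lemma d0_diff_abs_le:
  assumes "\<And>u. norm u = 1 \<Longrightarrow> \<bar>dist (sm u p) (sm u q) - dist (sm u a) (sm u b)\<bar> \<le> k"
  shows "\<bar>d0 sm \<mu> p q - d0 sm \<mu> a b\<bar> \<le> k"
proof -
  have "d0 sm \<mu> p q \<le> 1 * d0 sm \<mu> a b + k"
    by (rule d0_le_affine) (use assms in force)
  moreover have "1 * d0 sm \<mu> a b + (- k) \<le> d0 sm \<mu> p q"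
    by (rule d0_ge_affine) (use assms in force)
  ultimately show ?thesis by simp
qed

lemma d0_le_add:
  assumes "\<And>u. norm u = 1 \<Longrightarrow>
      dist (sm u p) (sm u q) \<le> dist (sm u a) (sm u b) + dist (sm u a') (sm u b') + k"
  shows "d0 sm \<mu> p q \<le> d0 sm \<mu> a b + d0 sm \<mu> a' b' + k"
proof -
  interpret prob_space \<mu> by (rule prob_space_\<mu>)
  have "d0 sm \<mu> p q \<le> (\<integral>u. dist (sm u a) (sm u b) + dist (sm u a') (sm u b') + k \<partial>\<mu>)"
    unfolding d0_def using assms integrable_dist_scale
    by (intro integral_mono) (auto simp: space_\<mu>)
  also have "\<dots> = d0 sm \<mu> a b + d0 sm \<mu> a' b' + k"
    unfolding d0_def using integrable_dist_scale by (simp add: prob_space)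
  finally show ?thesis .
qed

lemma d0_add_multiples_le:
  "d0 sm \<mu> (sm (of_nat (m + n)) z) 0 \<le> d0 sm \<mu> (sm (of_nat m) z) 0 + d0 sm \<mu> (sm (of_nat n) z) 0 + C0"
proof (rule d0_le_add)
  fix u
  show "dist (sm u (sm (of_nat (m + n)) z)) (sm u 0)
      \<le> dist (sm u (sm (of_nat m) z)) (sm u 0) + dist (sm u (sm (of_nat n) z)) (sm u 0) + C0"
    using dist_add_zero_le[of "sm u (sm (of_nat m) z)" "sm u (sm (of_nat n) z)"]
    by (simp add: scale_add_left scale_add_right)
qed

lemma qnorm_LIMSEQ: "(\<lambda>n. d0 sm \<mu> (sm (of_nat n) z) 0 / real n) \<longlonglongrightarrow> qnorm sm \<mu> z"
proof -
  have "convergent (\<lambda>n. (d0 sm \<mu> (sm (of_nat n) z) 0 + C0) / real n)"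
  proof (rule fekete_convergent)
    show "d0 sm \<mu> (sm (of_nat (m + n)) z) 0 + C0
        \<le> d0 sm \<mu> (sm (of_nat m) z) 0 + C0 + (d0 sm \<mu> (sm (of_nat n) z) 0 + C0)" for m n
      using d0_add_multiples_le[of m n z] by linarith
    show "0 \<le> d0 sm \<mu> (sm (of_nat n) z) 0 + C0" for n
      using d0_nonneg C0_nonneg by (rule add_nonneg_nonneg)
  qed
  then obtain L where "(\<lambda>n. (d0 sm \<mu> (sm (of_nat n) z) 0 + C0) / real n) \<longlonglongrightarrow> L"
    by (auto simp: convergent_def)
  then have "(\<lambda>n. d0 sm \<mu> (sm (of_nat n) z) 0 / real n) \<longlonglongrightarrow> L"
    by (rule LIMSEQ_divide_n_bounded_diff[where K = C0, rotated]) (simp add: C0_nonneg)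
  then show ?thesis unfolding qnorm_def delta0_def by (simp add: limI)
qed

lemma d0_multiples_translate:
  "\<bar>d0 sm \<mu> (sm (of_nat n) a) (sm (of_nat n) b) - d0 sm \<mu> (sm (of_nat n) (a - b)) 0\<bar> \<le> C0"
proof (rule d0_diff_abs_le)
  fix u
  define p where "p = sm u (sm (of_nat n) (a - b))"
  define q where "q = sm u (sm (of_nat n) b)"
  have a: "sm u (sm (of_nat n) a) = p + q"
    unfolding p_def q_def by (simp add: scale_add_right[symmetric])
  have "dist (p + q) (0 + q) \<le> dist p 0 + C0" by (rule dist_add_right_le)
  moreover have "dist ((p + q) + (- q)) (q + (- q)) \<le> dist (p + q) q + C0" by (rule dist_add_right_le)
  ultimately show "\<bar>dist (sm u (sm (of_nat n) a)) (sm u (sm (of_nat n) b))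
      - dist (sm u (sm (of_nat n) (a - b))) (sm u 0)\<bar> \<le> C0"
    unfolding a by (simp add: p_def[symmetric] q_def[symmetric] abs_le_iff)
qed

lemma delta0_LIMSEQ:
  "(\<lambda>n. d0 sm \<mu> (sm (of_nat n) a) (sm (of_nat n) b) / real n) \<longlonglongrightarrow> qnorm sm \<mu> (a - b)"
  by (rule LIMSEQ_divide_n_bounded_diff[OF d0_multiples_translate qnorm_LIMSEQ])

lemma delta0_eq_qnorm_diff: "delta0 sm \<mu> a b = qnorm sm \<mu> (a - b)"
  unfolding delta0_def using delta0_LIMSEQ by (rule limI)

lemma qnorm_add_E0:
  assumes e: "e \<in> E0 sm"
  shows "qnorm sm \<mu> (z + e) = qnorm sm \<mu> z"
proof -
  have "\<bar>d0 sm \<mu> (sm (of_nat n) (z + e)) (sm (of_nat n) 0)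
      - d0 sm \<mu> (sm (of_nat n) (z + e)) (sm (of_nat n) e)\<bar> \<le> C3" for n
  proof (rule d0_diff_abs_le)
    fix u
    define p where "p = sm u (sm (of_nat n) (z + e))"
    define r where "r = sm u (sm (of_nat n) e)"
    have "dist r 0 \<le> C3"
      using e unfolding r_def E0_eq_bounded_part bounded_part_def by (simp add: scale_mult[symmetric])
    moreover have "dist p 0 \<le> dist p r + dist r 0" "dist p r \<le> dist p 0 + dist r 0"
      by (rule dist_triangle, metis dist_commute dist_triangle)
    ultimately show "\<bar>dist (sm u (sm (of_nat n) (z + e))) (sm u (sm (of_nat n) 0))
        - dist (sm u (sm (of_nat n) (z + e))) (sm u (sm (of_nat n) e))\<bar> \<le> C3"
      by (simp add: p_def[symmetric] r_def[symmetric] abs_le_iff)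
  qed
  from LIMSEQ_divide_n_bounded_diff[OF this delta0_LIMSEQ]
  have "(\<lambda>n. d0 sm \<mu> (sm (of_nat n) (z + e)) (sm (of_nat n) 0) / real n) \<longlonglongrightarrow> qnorm sm \<mu> z"
    by simp
  moreover have "(\<lambda>n. d0 sm \<mu> (sm (of_nat n) (z + e)) (sm (of_nat n) 0) / real n) \<longlonglongrightarrow> qnorm sm \<mu> (z + e)"
    using delta0_LIMSEQ[of "z + e" 0] by simp
  ultimately show ?thesis using LIMSEQ_unique by blast
qed

lemma delta0_on_classes:
  assumes "a \<in> (\<lambda>e. x + e) ` E0 sm" "b \<in> (\<lambda>e. y + e) ` E0 sm"
  shows "delta0 sm \<mu> a b = qnorm sm \<mu> (x - y)"
proof -
  obtain e e' where e: "e \<in> E0 sm" "e' \<in> E0 sm" "a = x + e" "b = y + e'"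
    using assms by auto
  then have "e - e' \<in> E0 sm" using bounded_part_diff unfolding E0_eq_bounded_part by blast
  moreover have "a - b = (x - y) + (e - e')" using e by (simp add: algebra_simps)
  ultimately show ?thesis unfolding delta0_eq_qnorm_diff by (simp add: qnorm_add_E0)
qed

lemma delta0_le_d0: "delta0 sm \<mu> a b \<le> C1 * d0 sm \<mu> a b + C2"
proof (rule LIMSEQ_divide_n_le[OF _ delta0_LIMSEQ[of a b, folded delta0_eq_qnorm_diff]])
  fix n :: nat
  have "d0 sm \<mu> (sm (of_nat n) a) (sm (of_nat n) b) \<le> (C1 * real n) * d0 sm \<mu> a b + (C2 * real n + C3)"
    by (rule d0_le_affine)
      (use dist_scale_le[of "of_nat n" "sm _ a" "sm _ b"] in \<open>simp add: scale_of_nat_commute add.assoc\<close>)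
  then show "d0 sm \<mu> (sm (of_nat n) a) (sm (of_nat n) b) \<le> (C1 * d0 sm \<mu> a b + C2) * real n + C3"
    by (simp add: algebra_simps)
qed

lemma delta0_ge_d0: "d0 sm \<mu> a b / C1 - C2 \<le> delta0 sm \<mu> a b"
proof (rule LIMSEQ_divide_n_ge[OF _ delta0_LIMSEQ[of a b, folded delta0_eq_qnorm_diff]])
  fix n :: nat
  have "(real n / C1) * d0 sm \<mu> a b + (- C2 * real n - C3) \<le> d0 sm \<mu> (sm (of_nat n) a) (sm (of_nat n) b)"
    by (rule d0_ge_affine)
      (use dist_scale_ge[of "of_nat n" "sm _ a" "sm _ b"] in \<open>simp add: scale_of_nat_commute algebra_simps\<close>)
  then show "(d0 sm \<mu> a b / C1 - C2) * real n + - C3 \<le> d0 sm \<mu> (sm (of_nat n) a) (sm (of_nat n) b)"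
    by (simp add: algebra_simps)
qed

lemma delta0_le_dist: "delta0 sm \<mu> a b \<le> C1\<^sup>2 * dist a b + C1 * C2"
proof (rule LIMSEQ_divide_n_le[OF _ delta0_LIMSEQ[of a b, folded delta0_eq_qnorm_diff]])
  fix n :: nat
  show "d0 sm \<mu> (sm (of_nat n) a) (sm (of_nat n) b)
      \<le> (C1\<^sup>2 * dist a b + C1 * C2) * real n + (C1 * C3 + C2 + C3)"
  proof (rule d0_le_const)
    fix u :: 'k assume u: "norm u = 1"
    have "dist (sm u (sm (of_nat n) a)) (sm u (sm (of_nat n) b))
        \<le> C1 * dist (sm (of_nat n) a) (sm (of_nat n) b) + C2 + C3"
      using dist_scale_le[of u "sm (of_nat n) a" "sm (of_nat n) b"] u by simp
    also have "dist (sm (of_nat n) a) (sm (of_nat n) b) \<le> C1 * real n * dist a b + C2 * real n + C3"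
      using dist_scale_le[of "of_nat n" a b] by simp
    finally show "dist (sm u (sm (of_nat n) a)) (sm u (sm (of_nat n) b))
        \<le> (C1\<^sup>2 * dist a b + C1 * C2) * real n + (C1 * C3 + C2 + C3)"
      using C1_ge_1 by (simp add: algebra_simps power2_eq_square)
  qed
qed

lemma delta0_ge_dist: "dist a b / C1\<^sup>2 - C2 / C1 \<le> delta0 sm \<mu> a b"
proof (rule LIMSEQ_divide_n_ge[OF _ delta0_LIMSEQ[of a b, folded delta0_eq_qnorm_diff]])
  fix n :: nat
  show "(dist a b / C1\<^sup>2 - C2 / C1) * real n + - (C3 / C1 + C2 + C3)
      \<le> d0 sm \<mu> (sm (of_nat n) a) (sm (of_nat n) b)"
  proof (rule d0_ge_const)
    fix u :: 'k assume u: "norm u = 1"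
    have C1_pos: "0 < C1" using C1_ge_1 by simp
    have "(real n * dist a b / C1 - C2 * real n - C3) / C1 \<le> dist (sm (of_nat n) a) (sm (of_nat n) b) / C1"
      using dist_scale_ge[of "of_nat n" a b] C1_pos by (simp add: divide_right_mono)
    moreover have "dist (sm (of_nat n) a) (sm (of_nat n) b) / C1 - C2 - C3
        \<le> dist (sm u (sm (of_nat n) a)) (sm u (sm (of_nat n) b))"
      using dist_scale_ge[of u "sm (of_nat n) a" "sm (of_nat n) b"] u by simp
    moreover have "(dist a b / C1\<^sup>2 - C2 / C1) * real n + - (C3 / C1 + C2 + C3)
        = (real n * dist a b / C1 - C2 * real n - C3) / C1 - C2 - C3"
      using C1_pos by (simp add: field_simps power2_eq_square)
    ultimately show "(dist a b / C1\<^sup>2 - C2 / C1) * real n + - (C3 / C1 + C2 + C3)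
        \<le> dist (sm u (sm (of_nat n) a)) (sm u (sm (of_nat n) b))"
      by linarith
  qed
qed

lemma qnorm_d0_bounds_on_classes:
  assumes "a \<in> (\<lambda>e. x + e) ` E0 sm" "b \<in> (\<lambda>e. y + e) ` E0 sm"
  shows "d0 sm \<mu> a b / C1 - (C2 + C3) \<le> qnorm sm \<mu> (x - y) \<and>
    qnorm sm \<mu> (x - y) \<le> C1 * d0 sm \<mu> a b + (C2 + C3)"
  using delta0_le_d0[of a b] delta0_ge_d0[of a b] C3_nonneg
  unfolding delta0_on_classes[OF assms] by linarith

lemma qnorm_dist_bounds_on_classes:
  assumes "a \<in> (\<lambda>e. x + e) ` E0 sm" "b \<in> (\<lambda>e. y + e) ` E0 sm"
  shows "dist a b / C1\<^sup>2 - (C1 * C2 + C1 * C3 + C2) \<le> qnorm sm \<mu> (x - y) \<and>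
    qnorm sm \<mu> (x - y) \<le> C1\<^sup>2 * dist a b + (C1 * C2 + C1 * C3 + C2)"
proof -
  have "C2 / C1 \<le> C2" "0 \<le> C1 * C2" "0 \<le> C1 * C3"
    using C1_ge_1 C2_nonneg C3_nonneg by (simp_all add: divide_le_eq mult_le_cancel_left1)
  then show ?thesis
    using delta0_le_dist[of a b] delta0_ge_dist[of a b] C2_nonneg
    unfolding delta0_on_classes[OF assms] by linarith
qed

end

theorem proposition7:
  fixes sm :: "'k::{real_normed_div_algebra, euclidean_space} \<Rightarrow> 'e::{metric_space,ab_group_add} \<Rightarrow> 'e"
    and \<mu> :: "'k measure"
    and C0 C1 C2 C3 :: real
  assumes "metric_vector_space sm"
    and "translation_invariant C0 TYPE('e)"
    and "lipschitz_multiplicative C1 C2 C3 sm"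
    and "haar_unit_sphere \<mu>"
  shows "lipschitz_equiv C1 (C2 + C3) (\<lambda>x y. qnorm sm \<mu> (x - y))
           (hausdorff_cls (d0 sm \<mu>) (E0 sm))
       \<and> lipschitz_equiv (C1^2) (C1 * C2 + C1 * C3 + C2) (\<lambda>x y. qnorm sm \<mu> (x - y))
           (hausdorff_cls dist (E0 sm))"
proof -
  interpret averaged_lipschitz_metric_vector_space sm C0 C1 C2 C3 \<mu>
    using assms by unfold_locales
  have "0 < C1" using C1_ge_1 by simp
  show ?thesis
  proof (rule conjI; rule lipschitz_equiv_hausdorff_cls[OF zero_in_E0])
    show "0 < C1" "0 < C1\<^sup>2" using \<open>0 < C1\<close> by simp_all
  qed (fact qnorm_d0_bounds_on_classes qnorm_dist_bounds_on_classes)+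
qed

end
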